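(* Let $X\in\mathfrak{W}$. If $X(1)=0$ and $XL_{z_k}=L_{z_k}X$ on $\mathfrak{H}^1$ for every $k\ge1$, then $X=0$.
   Context: Let $\mathfrak{H}=\mathbb{Q}\langle x,y\rangle$, $\mathfrak{H}^1=\mathbb{Q}+\mathfrak{H}y$; $L_w(w')=ww'$; $z_k=x^{k-1}y$. The harmonic product $\ast$ on $\mathfrak{H}^1$ is the $\mathbb{Q}$-bilinear map with $1\ast w=w\ast1=w$ and $z_kw\ast z_lw'=z_k(w\ast z_lw')+z_l(z_kw\ast w')+z_{k+l}(w\ast w')$; $\mathcal{H}_w(v)=w\ast v$; $\mathfrak{W}$ is the $\mathbb{Q}$-span of the operators $\mathcal{H}_w$ ($w\in\mathfrak{H}^1$) on $\mathfrak{H}^1$. *)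

theory Defs
  imports Complex_Main "HOL-Library.Poly_Mapping"
begin

text \<open>Letters x and y; words are lists of letters; the algebra H = Q<x,y> is the
  free Q-vector space on words (finitely supported coefficient functions), with
  concatenation of words as the monomial product.\<close>

datatype letter = Lx | Ly

type_synonym word = "letter list"
type_synonym H = "word \<Rightarrow>\<^sub>0 rat"

definition smul :: "rat \<Rightarrow> H \<Rightarrow> H" where
  "smul c p = Poly_Mapping.map (\<lambda>a. c * a) p"

definition lin_ext :: "(word \<Rightarrow> H) \<Rightarrow> H \<Rightarrow> H" where
  "lin_ext f p = (\<Sum>a\<in>Poly_Mapping.keys p. smul (Poly_Mapping.lookup p a) (f a))"

text \<open>H^1 = Q + H y: span of the empty word and words ending in y.\<close>
definition H1 :: "H set" where
  "H1 = {p. \<forall>a\<in>Poly_Mapping.keys p. a = [] \<or> last a = Ly}"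

definition Lmul :: "word \<Rightarrow> H \<Rightarrow> H" where
  "Lmul w p = lin_ext (\<lambda>a. Poly_Mapping.single (w @ a) 1) p"

definition z :: "nat \<Rightarrow> word" where
  "z k = replicate (k - 1) Lx @ [Ly]"

definition zword :: "nat list \<Rightarrow> word" where
  "zword ks = concat (map z ks)"

fun zidx :: "nat \<Rightarrow> word \<Rightarrow> nat list" where
  "zidx n [] = []"
| "zidx n (Lx # w) = zidx (Suc n) w"
| "zidx n (Ly # w) = Suc n # zidx 0 w"

function hw :: "nat list \<Rightarrow> nat list \<Rightarrow> H" where
  "hw [] v = Poly_Mapping.single (zword v) 1"
| "hw (k # u) [] = Poly_Mapping.single (zword (k # u)) 1"
| "hw (k # u) (l # v) =
     Lmul (z k) (hw u (l # v)) + Lmul (z l) (hw (k # u) v) + Lmul (z (k + l)) (hw u v)"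
  by pat_completeness auto
termination by (relation "measure (\<lambda>(u, v). length u + length v)") auto

text \<open>The harmonic product, extended bilinearly (meaningful on H^1).\<close>
definition hprod :: "H \<Rightarrow> H \<Rightarrow> H" (infixl "\<star>" 70) where
  "p \<star> q = lin_ext (\<lambda>a. lin_ext (\<lambda>b. hw (zidx 0 a) (zidx 0 b)) q) p"

definition Wspace :: "(H \<Rightarrow> H) set" where
  "Wspace = {X. \<exists>(n::nat) (c::nat \<Rightarrow> rat) (w::nat \<Rightarrow> H). (\<forall>i<n. w i \<in> H1) \<and>
                 X = (\<lambda>v. \<Sum>i<n. smul (c i) (w i \<star> v))}"

end

theory Submission
  imports Defs
begin

(* Every element of W is a Q-linear operator on H: the harmonic
   product is built from linear extensions, which are additive and commute with
   scalars.  On the other hand every word of H^1 is a z-word z_(k1)...z_(kn),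
   i.e. it arises from the empty word 1 by repeated left multiplications
   L_(z_k).  Hence for ANY linear X with X(1) = 0 commuting with all L_(z_k),
   induction on the length of the word gives X(w) = 0 on every word of H^1,
   and linearity extends this to all of H^1. *)

lemma lookup_smul: "Poly_Mapping.lookup (smul c p) a = c * Poly_Mapping.lookup p a"
  by (simp add: smul_def Poly_Mapping.map.rep_eq when_def)

lemma smul_add: "smul c (p + q) = smul c p + smul c q"
  by (rule poly_mapping_eqI) (simp add: lookup_smul lookup_add algebra_simps)

lemma smul_add_left: "smul (a + b) p = smul a p + smul b p"
  by (rule poly_mapping_eqI) (simp add: lookup_smul lookup_add algebra_simps)

lemma smul_zero_left: "smul 0 p = 0"
  by (rule poly_mapping_eqI) (simp add: lookup_smul)

lemma smul_zero_right: "smul c 0 = 0"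
  by (rule poly_mapping_eqI) (simp add: lookup_smul)

lemma smul_one: "smul 1 p = p"
  by (rule poly_mapping_eqI) (simp add: lookup_smul)

lemma smul_smul: "smul a (smul b p) = smul (a * b) p"
  by (rule poly_mapping_eqI) (simp add: lookup_smul)

lemma smul_sum: "smul c (sum f S) = (\<Sum>x\<in>S. smul c (f x))"
  by (induction S rule: infinite_finite_induct) (auto simp: smul_zero_right smul_add)

text \<open>The defining sum of a linear extension may be taken over any finite
  superset of the support; this is what makes additivity provable.\<close>
lemma lin_ext_superset:
  assumes "finite S" "Poly_Mapping.keys p \<subseteq> S"
  shows "lin_ext f p = (\<Sum>a\<in>S. smul (Poly_Mapping.lookup p a) (f a))"
  unfolding lin_ext_def
  by (rule sum.mono_neutral_left) (use assms in \<open>auto simp: in_keys_iff smul_zero_left\<close>)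

lemma lin_ext_add: "lin_ext f (p + q) = lin_ext f p + lin_ext f q"
proof -
  let ?S = "Poly_Mapping.keys p \<union> Poly_Mapping.keys q"
  let ?term = "\<lambda>r a. smul (Poly_Mapping.lookup r a) (f a)"
  have "lin_ext f (p + q) = (\<Sum>a\<in>?S. ?term (p + q) a)"
    using keys_add[of p q] by (intro lin_ext_superset) auto
  also have "\<dots> = (\<Sum>a\<in>?S. ?term p a) + (\<Sum>a\<in>?S. ?term q a)"
    by (simp add: lookup_add smul_add_left sum.distrib)
  also have "\<dots> = lin_ext f p + lin_ext f q"
    by (subst (1 2) lin_ext_superset[of ?S]) auto
  finally show ?thesis .
qed

lemma lin_ext_smul: "lin_ext f (smul c p) = smul c (lin_ext f p)"
proof -
  have "lin_ext f (smul c p) =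
          (\<Sum>a\<in>Poly_Mapping.keys p. smul (Poly_Mapping.lookup (smul c p) a) (f a))"
    by (rule lin_ext_superset) (auto simp: in_keys_iff lookup_smul)
  then show ?thesis
    by (simp add: lin_ext_def smul_sum lookup_smul smul_smul)
qed

text \<open>Linear extension is also linear in the map being extended; needed because
  the harmonic product is a nested linear extension.\<close>
lemma lin_ext_fun_add: "lin_ext (\<lambda>a. f a + g a) p = lin_ext f p + lin_ext g p"
  by (simp add: lin_ext_def smul_add sum.distrib)

lemma lin_ext_fun_smul: "lin_ext (\<lambda>a. smul c (f a)) p = smul c (lin_ext f p)"
  by (simp add: lin_ext_def smul_sum smul_smul mult.commute)

lemma lin_ext_single: "lin_ext f (Poly_Mapping.single a 1) = f a"
  by (simp add: lin_ext_def smul_one)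

lemma lin_ext_monomials: "lin_ext (\<lambda>a. Poly_Mapping.single a 1) p = p"
proof (rule poly_mapping_eqI)
  fix k
  have "Poly_Mapping.lookup p a * (if a = k then 1 else 0) =
          (if a = k then Poly_Mapping.lookup p a else 0)" for a
    by simp
  then show "Poly_Mapping.lookup (lin_ext (\<lambda>a. Poly_Mapping.single a 1) p) k =
               Poly_Mapping.lookup p k"
    by (simp add: lin_ext_def lookup_sum lookup_smul lookup_single when_def in_keys_iff)
qed

lemma Lmul_single: "Lmul u (Poly_Mapping.single b 1) = Poly_Mapping.single (u @ b) 1"
  by (simp add: Lmul_def lin_ext_single)

lemma Lmul_zero: "Lmul u 0 = 0"
  by (simp add: Lmul_def lin_ext_def)

definition linear_op :: "(H \<Rightarrow> H) \<Rightarrow> bool" where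
  "linear_op X \<longleftrightarrow> (\<forall>p q. X (p + q) = X p + X q) \<and> (\<forall>c p. X (smul c p) = smul c (X p))"

lemma linear_op_expand:
  assumes "linear_op X"
  shows "X p = lin_ext (\<lambda>a. X (Poly_Mapping.single a 1)) p"
proof -
  have add: "X (p + q) = X p + X q" and scal: "X (smul c p) = smul c (X p)" for p q c
    using assms by (auto simp: linear_op_def)
  have zero: "X 0 = 0"
    using scal[of 0 0] by (simp add: smul_zero_left)
  have sum: "X (sum f S) = (\<Sum>x\<in>S. X (f x))" for f :: "word \<Rightarrow> H" and S
    by (induction S rule: infinite_finite_induct) (auto simp: zero add)
  have "X p = X (lin_ext (\<lambda>a. Poly_Mapping.single a 1) p)"
    by (simp add: lin_ext_monomials)
  then show ?thesis
    by (simp add: lin_ext_def sum scal)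
qed

lemma hprod_linear: "linear_op (\<lambda>v. w \<star> v)"
  by (simp add: linear_op_def hprod_def lin_ext_add lin_ext_fun_add lin_ext_smul lin_ext_fun_smul)

lemma Wspace_linear:
  assumes "X \<in> Wspace"
  shows "linear_op X"
proof -
  from assms obtain n :: nat and c w where X: "X = (\<lambda>v. \<Sum>i<n. smul (c i) (w i \<star> v))"
    unfolding Wspace_def by blast
  have "w \<star> (p + q) = w \<star> p + w \<star> q" and "w \<star> smul a p = smul a (w \<star> p)" for w p q a
    using hprod_linear[of w] by (auto simp: linear_op_def)
  then show ?thesis
    by (simp add: linear_op_def X smul_add sum.distrib smul_smul smul_sum mult.commute)
qed

lemma H1_word_split:
  assumes "a \<noteq> []" "last a = Ly"
  obtains k b where "k \<ge> 1" "a = z k @ b" "b = [] \<or> last b = Ly"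
proof -
  have "\<exists>m b. a = replicate m Lx @ Ly # b" if "Ly \<in> set a" for a
    using that
  proof (induction a)
    case (Cons c a)
    then show ?case
      by (cases c) (force intro: exI[of _ "Suc _"], metis replicate_0 append_Nil)
  qed simp
  moreover have "Ly \<in> set a"
    using assms last_in_set by fastforce
  ultimately obtain m b where ab: "a = replicate m Lx @ Ly # b" by blast
  have "a = z (Suc m) @ b" by (simp add: ab z_def)
  moreover have "b = [] \<or> last b = Ly"
    using assms(2) ab by (cases b) auto
  ultimately show ?thesis using that[of "Suc m"] by simp
qed

lemma H1_word_induct [consumes 1, case_names empty step]:
  assumes "a = [] \<or> last a = Ly"
    and empty: "P []"
    and step: "\<And>k b. k \<ge> 1 \<Longrightarrow> b = [] \<or> last b = Ly \<Longrightarrow> P b \<Longrightarrow> P (z k @ b)"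
  shows "P a"
  using assms(1)
proof (induction "length a" arbitrary: a rule: less_induct)
  case less
  show ?case
  proof (cases "a = []")
    case False
    with less.prems obtain k b where "k \<ge> 1" "a = z k @ b" "b = [] \<or> last b = Ly"
      using H1_word_split by (metis)
    moreover have "length b < length a"
      using \<open>a = z k @ b\<close> by (simp add: z_def)
    ultimately show ?thesis
      using less.hyps step by blast
  qed (simp add: empty)
qed

lemma linear_op_commuting_vanishes:
  assumes lin: "linear_op X"
    and one: "X (Poly_Mapping.single [] 1) = 0"
    and comm: "\<forall>k\<ge>1. \<forall>v\<in>H1. X (Lmul (z k) v) = Lmul (z k) (X v)"
    and "v \<in> H1"
  shows "X v = 0"
proof -
  have words: "X (Poly_Mapping.single a 1) = 0" if "a = [] \<or> last a = Ly" for a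
    using that
  proof (induction a rule: H1_word_induct)
    case (step k b)
    have "Poly_Mapping.single b 1 \<in> H1"
      using step.hyps(2) by (simp add: H1_def)
    then have "X (Lmul (z k) (Poly_Mapping.single b 1)) = 0"
      using comm step by (simp add: Lmul_zero)
    then show ?case by (simp add: Lmul_single)
  qed (rule one)
  have "X v = lin_ext (\<lambda>a. X (Poly_Mapping.single a 1)) v"
    using lin by (rule linear_op_expand)
  also have "\<dots> = 0"
    using \<open>v \<in> H1\<close> words
    by (auto simp: lin_ext_def H1_def smul_zero_right intro!: sum.neutral)
  finally show ?thesis .
qed

theorem mainTheorem15:
  assumes "X \<in> Wspace"
    and "X (Poly_Mapping.single [] 1) = 0"
    and "\<forall>k\<ge>1. \<forall>v\<in>H1. X (Lmul (z k) v) = Lmul (z k) (X v)"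
  shows "\<forall>v\<in>H1. X v = 0"
  using linear_op_commuting_vanishes[OF Wspace_linear[OF assms(1)] assms(2,3)] by blast

end
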